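(* Let $(\phi_1,\dots,\phi_N)\in\mathcal{U}$ be an arbitrary $N$-tuple of admissible stationary strategies. Assume there exists a constant $L_s>0$ with $$|\phi_i(x_1)-\phi_i(x_2)|\le L_s |x_1-x_2|,\quad i=1,\dots, N,$$ and assume hypotheses H1, H2 and H3 hold. Then for every $x\in\mathbb{V}$, $$\lim_{h\rightarrow 0} \left|W_{i,h}(\phi_{i},\phi_{-i},x)- W_i(\phi_{i},\phi_{-i},x)\right|=0,\quad i=1,\dots,N.$$
   Context: Setting: an $N$-player infinite-horizon differential game. Player $i$ maximizes over own control $u_i$ $$W_i(u_i,u_{-i},x_0)=\int_0^\infty f_i(x,u_i,u_{-i})e^{-\rho t}\,\mathrm{d}t$$ subject to $\dot x=g(x,u_i,u_{-i})$, $x(0)=x_0$, where $f_i:\mathbb{V}\times\mathbb{U}_1\times\dots\times\mathbb{U}_N\to\mathbb{R}$, $g:\mathbb{V}\times\mathbb{U}_1\times\dots\times\mathbb{U}_N\to\mathbb{R}^n$ are continuous, $\mathbb{V}\subset\mathbb{R}^n$, $\mathbb{U}_i\subset\mathbb{R}^m$, $\rho>0$, and $u_{-i}=[u_1,\dots,u_{i-1},u_{i+1},\dots,u_N]$. $\mathcal{U}=\mathcal{U}_1\times\dots\times\mathcal{U}_N$ is the set of admissible stationary Markovian strategies: each $\mathcal{U}_i$ is a set of measurable functions $\phi_i:\mathbb{V}\to\mathbb{U}_i$ such that for every $(\phi_1,\dots,\phi_N)\in\mathcal{U}$ and every $x_0\in\mathbb{V}$ the state equation with $u_i=\phi_i(x(t))$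 has a unique absolutely continuous solution $x(t)\in\mathbb{V}$ for all $t\ge0$. $W_i(\phi_i,\phi_{-i},x)$ denotes the payoff when the strategies are used from initial state $x$. Discrete-time game: for $h>0$, $t_n=nh$, $\beta_h=1-\rho h$, player $i$ maximizes $$W_{i,h}(\boldsymbol{u}_i,\boldsymbol{u}_{-i},x_0)=h\sum_{n=0}^\infty \beta_h^n f_i(x_n,u_{i,n},u_{-i,n})$$ subject to $x_{n+1}=x_n+hg(x_n,u_{i,n},u_{-i,n})$. It is assumed that for every $x_0\in\mathbb{V}$ and every $(\psi_1,\dots,\psi_N)\in\mathcal{U}$ this recursion with $u_{j,n}=\psi_j(x_n)$ is well defined with $x_n\in\mathbb{V}$ for all $n$; $W_{i,h}(\psi_i,\psi_{-i},x_0)$ denotes the corresponding discrete payoff. Hypotheses: H1: there is $L_g$ with $|g(x,u_1,\dots,u_N)-g(y,v_1,\dots,v_N)|\le L_g(|x-y|+\sum_{j=1}^N|u_j-v_j|)$ for all arguments. H2: there are $L_i$ with $|f_i(x,u_1,\dots,u_N)-f_i(y,v_1,\dots,v_N)|\le L_i(|x-y|+\sum_{j=1}^N|u_j-v_j|)$. H3: there is $M$ with $|f_i(x,u_1,\dots,u_N)|\le M$ for all arguments. *)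

theory Defs
  imports "HOL-Analysis.Analysis"
begin

text \<open>Players are indexed by a finite type 'p (N = CARD('p)); states live in
  real^'n, controls in real^'m.\<close>

definition abs_continuous_on :: "real set \<Rightarrow> (real \<Rightarrow> 'a::real_normed_vector) \<Rightarrow> bool" where
  "abs_continuous_on S x \<longleftrightarrow>
     (\<forall>\<epsilon>>0. \<exists>\<delta>>0. \<forall>(n::nat) (a::nat\<Rightarrow>real) b.
        (\<forall>k<n. a k \<le> b k \<and> a k \<in> S \<and> b k \<in> S) \<and>
        (\<forall>k<n. \<forall>l<n. k \<noteq> l \<longrightarrow> b k \<le> a l \<or> b l \<le> a k) \<and>
        (\<Sum>k<n. b k - a k) < \<delta>
        \<longrightarrow> (\<Sum>k<n. norm (x (b k) - x (a k))) < \<epsilon>)"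

definition is_solution ::
  "('a::euclidean_space) set \<Rightarrow> ('a \<Rightarrow> ('p \<Rightarrow> 'b) \<Rightarrow> 'a) \<Rightarrow> ('p \<Rightarrow> 'a \<Rightarrow> 'b) \<Rightarrow> 'a \<Rightarrow> (real \<Rightarrow> 'a) \<Rightarrow> bool" where
  "is_solution V g \<phi> x0 x \<longleftrightarrow>
     x 0 = x0 \<and> (\<forall>t\<ge>0. x t \<in> V) \<and>
     (\<forall>T\<ge>0. abs_continuous_on {0..T} x) \<and>
     (AE t in lborel. 0 < t \<longrightarrow> (x has_vector_derivative g (x t) (\<lambda>j. \<phi> j (x t))) (at t))"

definition admissible ::
  "('a::euclidean_space) set \<Rightarrow> ('p \<Rightarrow> ('b::euclidean_space) set) \<Rightarrow> ('a \<Rightarrow> ('p \<Rightarrow> 'b) \<Rightarrow> 'a)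
    \<Rightarrow> ('p \<Rightarrow> 'a \<Rightarrow> 'b) \<Rightarrow> bool" where
  "admissible V U g \<phi> \<longleftrightarrow>
     (\<forall>i. \<phi> i \<in> borel_measurable (restrict_space borel V) \<and> (\<forall>x\<in>V. \<phi> i x \<in> U i)) \<and>
     (\<forall>x0\<in>V. \<exists>x. is_solution V g \<phi> x0 x \<and>
        (\<forall>y. is_solution V g \<phi> x0 y \<longrightarrow> (\<forall>t\<ge>0. y t = x t)))"

definition traj :: "('a::euclidean_space) set \<Rightarrow> ('a \<Rightarrow> ('p \<Rightarrow> 'b) \<Rightarrow> 'a) \<Rightarrow> ('p \<Rightarrow> 'a \<Rightarrow> 'b) \<Rightarrow> 'a \<Rightarrow> real \<Rightarrow> 'a" where
  "traj V g \<phi> x0 = (SOME x. is_solution V g \<phi> x0 x)"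

definition payoff ::
  "('a::euclidean_space) set \<Rightarrow> ('a \<Rightarrow> ('p \<Rightarrow> 'b) \<Rightarrow> 'a) \<Rightarrow> ('p \<Rightarrow> 'a \<Rightarrow> ('p \<Rightarrow> 'b) \<Rightarrow> real) \<Rightarrow> real
    \<Rightarrow> ('p \<Rightarrow> 'a \<Rightarrow> 'b) \<Rightarrow> 'p \<Rightarrow> 'a \<Rightarrow> real" where
  "payoff V g f \<rho> \<phi> i x0 =
     integral {0..} (\<lambda>t. f i (traj V g \<phi> x0 t) (\<lambda>j. \<phi> j (traj V g \<phi> x0 t)) * exp (- \<rho> * t))"

fun euler :: "('a::real_vector \<Rightarrow> ('p \<Rightarrow> 'b) \<Rightarrow> 'a) \<Rightarrow> ('p \<Rightarrow> 'a \<Rightarrow> 'b) \<Rightarrow> real \<Rightarrow> 'a \<Rightarrow> nat \<Rightarrow> 'a" where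
  "euler g \<phi> h x0 0 = x0"
| "euler g \<phi> h x0 (Suc n) =
     euler g \<phi> h x0 n + h *\<^sub>R g (euler g \<phi> h x0 n) (\<lambda>j. \<phi> j (euler g \<phi> h x0 n))"

definition payoff_h ::
  "('a::real_vector \<Rightarrow> ('p \<Rightarrow> 'b) \<Rightarrow> 'a) \<Rightarrow> ('p \<Rightarrow> 'a \<Rightarrow> ('p \<Rightarrow> 'b) \<Rightarrow> real) \<Rightarrow> real
    \<Rightarrow> real \<Rightarrow> ('p \<Rightarrow> 'a \<Rightarrow> 'b) \<Rightarrow> 'p \<Rightarrow> 'a \<Rightarrow> real" where
  "payoff_h g f \<rho> h \<phi> i x0 =
     h * (\<Sum>n. (1 - \<rho> * h) ^ n * f i (euler g \<phi> h x0 n) (\<lambda>j. \<phi> j (euler g \<phi> h x0 n)))"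

end

theory Submission
  imports Defs
begin

text \<open>Along the closed-loop dynamics the trajectory is an absolutely continuous solution of
  \<open>x' = G(x)\<close> with \<open>G\<close> Lipschitz on \<open>V\<close>; absolute continuity is exactly what turns the almost-everywhere
  differential equation into the integral equation \<open>x(t) - x(s) = \<integral>\<^sub>s\<^sup>t G(x)\<close>. On a bounded
  horizon \<open>[0, T]\<close> the Euler iterates therefore stay within \<open>O(h)\<close> of \<open>x(n h)\<close> (discrete Gronwall),
  so on each cell \<open>[n h, n h + h]\<close> both the running reward and the discount factor \<open>(1 - \<rho> h)\<^sup>n\<close>
  versus \<open>exp (- \<rho> t)\<close> differ by \<open>O(h)\<close>. Beyond \<open>T\<close> both payoffs are bounded by \<open>M exp (- \<rho> T) / \<rho>\<close>,
  so letting first \<open>h \<rightarrow> 0\<close> and then \<open>T \<rightarrow> \<infinity>\<close> gives the claim.\<close>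

section \<open>Absolutely continuous functions\<close>

text \<open>\<open>Polynomial.content\<close> shadows the Henstock--Kurzweil \<open>content\<close> of intervals.\<close>

abbreviation interval_content :: "real set \<Rightarrow> real"
  where "interval_content \<equiv> Henstock_Kurzweil_Integration.content"

lemma abs_continuous_onD_finite:
  fixes x :: "real \<Rightarrow> 'a::real_normed_vector"
  assumes "abs_continuous_on S x" "e > 0"
  obtains \<delta> where "\<delta> > 0"
    "\<And>P a b. finite P \<Longrightarrow> (\<forall>k\<in>P. a k \<le> b k \<and> a k \<in> S \<and> b k \<in> S) \<Longrightarrow>
       (\<forall>k\<in>P. \<forall>l\<in>P. k \<noteq> l \<longrightarrow> b k \<le> a l \<or> b l \<le> a k) \<Longrightarrow> (\<Sum>k\<in>P. b k - a k) < \<delta> \<Longrightarrow>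
       (\<Sum>k\<in>P. norm (x (b k) - x (a k))) < e"
proof -
  obtain \<delta> where "\<delta> > 0" and \<delta>: "\<And>n (a::nat\<Rightarrow>real) b.
      (\<forall>k<n. a k \<le> b k \<and> a k \<in> S \<and> b k \<in> S) \<and>
      (\<forall>k<n. \<forall>l<n. k \<noteq> l \<longrightarrow> b k \<le> a l \<or> b l \<le> a k) \<and> (\<Sum>k<n. b k - a k) < \<delta>
      \<Longrightarrow> (\<Sum>k<n. norm (x (b k) - x (a k))) < e"
    using assms unfolding abs_continuous_on_def by blast
  show ?thesis
  proof (rule that[OF \<open>\<delta> > 0\<close>])
    fix P and a b :: "_ \<Rightarrow> real"
    assume "finite P" and ab: "\<forall>k\<in>P. a k \<le> b k \<and> a k \<in> S \<and> b k \<in> S"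
      and disj: "\<forall>k\<in>P. \<forall>l\<in>P. k \<noteq> l \<longrightarrow> b k \<le> a l \<or> b l \<le> a k"
      and small: "(\<Sum>k\<in>P. b k - a k) < \<delta>"
    obtain h where h: "bij_betw h {..<card P} P"
      using ex_bij_betw_nat_finite[OF \<open>finite P\<close>] by (auto simp: atLeast0LessThan)
    have reindex: "(\<Sum>k<card P. c (h k)) = (\<Sum>k\<in>P. c k)" for c :: "_ \<Rightarrow> real"
      using sum.reindex_bij_betw[OF h] .
    have hP: "h k \<in> P" if "k < card P" for k
      using h that by (auto dest: bij_betwE)
    have "(\<Sum>k<card P. norm (x (b (h k)) - x (a (h k)))) < e"
    proof (rule \<delta>, intro conjI allI impI)
      fix k assume "k < card P"
      then show "a (h k) \<le> b (h k)" "a (h k) \<in> S" "b (h k) \<in> S"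
        using ab hP by auto
    next
      fix k l assume "k < card P" "l < card P" "k \<noteq> l"
      then have "h k \<noteq> h l"
        using h by (auto simp: bij_betw_def inj_on_def)
      then show "b (h k) \<le> a (h l) \<or> b (h l) \<le> a (h k)"
        using disj hP \<open>k < card P\<close> \<open>l < card P\<close> by blast
    next
      show "(\<Sum>k<card P. b (h k) - a (h k)) < \<delta>"
        using small reindex[of "\<lambda>k. b k - a k"] by simp
    qed
    then show "(\<Sum>k\<in>P. norm (x (b k) - x (a k))) < e"
      using reindex[of "\<lambda>k. norm (x (b k) - x (a k))"] by simp
  qed
qed

lemma interior_Icc_disjoint_imp_le:
  fixes u v u' v' :: real
  assumes "u < v" "u' < v'" "interior {u..v} \<inter> interior {u'..v'} = {}"
  shows "v \<le> u' \<or> v' \<le> u"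
proof (rule ccontr)
  assume "\<not> ?thesis"
  then have "(max u u' + min v v') / 2 \<in> interior {u..v} \<inter> interior {u'..v'}"
    using assms(1,2) by auto
  then show False using assms(3) by blast
qed

lemma tagged_division_of_real_intervalD:
  fixes a b :: real
  assumes "p tagged_division_of {a..b}" "k \<in> p"
  shows "snd k = {Inf (snd k)..Sup (snd k)}" "Inf (snd k) \<le> fst k" "fst k \<le> Sup (snd k)"
    "a \<le> Inf (snd k)" "Sup (snd k) \<le> b"
proof -
  have "(fst k, snd k) \<in> p"
    using assms(2) by simp
  note K = tagged_division_ofD(2-4)[OF assms(1) this]
  obtain u v where "snd k = {u..v}"
    using K(3) by (metis box_real(2))
  with K(1,2) show "snd k = {Inf (snd k)..Sup (snd k)}" "Inf (snd k) \<le> fst k" "fst k \<le> Sup (snd k)"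
    "a \<le> Inf (snd k)" "Sup (snd k) \<le> b"
    by auto
qed

lemma tagged_division_of_real_nonoverlapping:
  fixes a b :: real
  assumes p: "p tagged_division_of {a..b}" and "k \<in> p" "l \<in> p" "k \<noteq> l"
    and "Inf (snd k) < Sup (snd k)" "Inf (snd l) < Sup (snd l)"
  shows "Sup (snd k) \<le> Inf (snd l) \<or> Sup (snd l) \<le> Inf (snd k)"
proof (rule interior_Icc_disjoint_imp_le)
  have "interior (snd k) \<inter> interior (snd l) = {}"
    using tagged_division_ofD(5)[OF p, of "fst k" "snd k" "fst l" "snd l"] assms(2-4) by simp
  then show "interior {Inf (snd k)..Sup (snd k)} \<inter> interior {Inf (snd l)..Sup (snd l)} = {}"
    using tagged_division_of_real_intervalD(1)[OF p \<open>k \<in> p\<close>, symmetric]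
      tagged_division_of_real_intervalD(1)[OF p \<open>l \<in> p\<close>, symmetric] by simp
qed (fact assms)+

lemma abs_continuous_on_tagged_division_bound:
  fixes x :: "real \<Rightarrow> 'a::real_normed_vector"
  assumes "abs_continuous_on S x" "{a..b} \<subseteq> S" "e > 0"
  obtains \<delta> where "\<delta> > 0"
    "\<And>p Z. p tagged_division_of {a..b} \<Longrightarrow> (\<Sum>(t, K)\<in>p. interval_content K * indicator Z t) < \<delta> \<Longrightarrow>
       (\<Sum>(t, K)\<in>p. indicator Z t * norm (x (Sup K) - x (Inf K))) < e"
proof (rule abs_continuous_onD_finite[OF assms(1,3)])
  fix \<delta> :: real
  assume "\<delta> > 0" and \<delta>: "\<And>(P :: (real \<times> real set) set) a' b'. finite P \<Longrightarrow>
      (\<forall>k\<in>P. a' k \<le> b' k \<and> a' k \<in> S \<and> b' k \<in> S) \<Longrightarrow>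
      (\<forall>k\<in>P. \<forall>l\<in>P. k \<noteq> l \<longrightarrow> b' k \<le> a' l \<or> b' l \<le> a' k) \<Longrightarrow> (\<Sum>k\<in>P. b' k - a' k) < \<delta> \<Longrightarrow>
      (\<Sum>k\<in>P. norm (x (b' k) - x (a' k))) < e"
  show ?thesis
  proof (rule that[OF \<open>\<delta> > 0\<close>])
    fix p Z
    assume p: "p tagged_division_of {a..b}"
      and small: "(\<Sum>(t, K)\<in>p. interval_content K * indicator Z t) < \<delta>"
    define P where "P = {k \<in> p. fst k \<in> Z \<and> interval_content (snd k) > 0}"
    have "finite p" using p by blast
    then have "finite P" "P \<subseteq> p" unfolding P_def by auto
    note K = tagged_division_of_real_intervalD[OF p]
    have Inf_le_Sup: "Inf (snd k) \<le> Sup (snd k)" if "k \<in> p" for k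
      using K(2,3)[OF that] by (rule order_trans)
    have length_K: "interval_content (snd k) = Sup (snd k) - Inf (snd k)" if "k \<in> p" for k
      using Inf_le_Sup[OF that] by (subst K(1)[OF that]) simp
    have "(\<Sum>k\<in>P. norm (x (Sup (snd k)) - x (Inf (snd k)))) < e"
    proof (rule \<delta>[OF \<open>finite P\<close>])
      show "\<forall>k\<in>P. Inf (snd k) \<le> Sup (snd k) \<and> Inf (snd k) \<in> S \<and> Sup (snd k) \<in> S"
        using Inf_le_Sup K(4,5) \<open>P \<subseteq> p\<close> \<open>{a..b} \<subseteq> S\<close> by fastforce
      show "\<forall>k\<in>P. \<forall>l\<in>P. k \<noteq> l \<longrightarrow> Sup (snd k) \<le> Inf (snd l) \<or> Sup (snd l) \<le> Inf (snd k)"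
      proof (intro ballI impI)
        fix k l assume "k \<in> P" "l \<in> P" "k \<noteq> l"
        then have "k \<in> p" "l \<in> p"
          using \<open>P \<subseteq> p\<close> by auto
        moreover have "Inf (snd k) < Sup (snd k)" "Inf (snd l) < Sup (snd l)"
          using \<open>k \<in> P\<close> \<open>l \<in> P\<close> length_K[OF \<open>k \<in> p\<close>] length_K[OF \<open>l \<in> p\<close>] unfolding P_def by auto
        ultimately show "Sup (snd k) \<le> Inf (snd l) \<or> Sup (snd l) \<le> Inf (snd k)"
          using tagged_division_of_real_nonoverlapping[OF p _ _ \<open>k \<noteq> l\<close>] by blast
      qed
      have "(\<Sum>k\<in>P. Sup (snd k) - Inf (snd k)) = (\<Sum>k\<in>P. interval_content (snd k) * indicator Z (fst k))"
        using length_K \<open>P \<subseteq> p\<close> by (intro sum.cong) (auto simp: P_def)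
      also have "\<dots> \<le> (\<Sum>k\<in>p. interval_content (snd k) * indicator Z (fst k))"
        using \<open>finite p\<close> \<open>P \<subseteq> p\<close> by (intro sum_mono2) auto
      finally show "(\<Sum>k\<in>P. Sup (snd k) - Inf (snd k)) < \<delta>"
        using small by (simp add: case_prod_unfold)
    qed
    moreover have "(\<Sum>(t, K)\<in>p. indicator Z t * norm (x (Sup K) - x (Inf K)))
        = (\<Sum>k\<in>P. norm (x (Sup (snd k)) - x (Inf (snd k))))"
    proof (rule sum.mono_neutral_cong_right[OF \<open>finite p\<close> \<open>P \<subseteq> p\<close>])
      have "Sup (snd k) = Inf (snd k)" if "k \<in> p - P" "fst k \<in> Z" for k
        using that Inf_le_Sup length_K unfolding P_def by fastforce
      then show "\<forall>k\<in>p - P. (case k of (t, K) \<Rightarrow> indicator Z t * norm (x (Sup K) - x (Inf K))) = 0"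
        by (auto simp: case_prod_unfold indicator_def)
      show "(case k of (t, K) \<Rightarrow> indicator Z t * norm (x (Sup K) - x (Inf K)))
          = norm (x (Sup (snd k)) - x (Inf (snd k)))" if "k \<in> P" for k
        using that unfolding P_def by (simp add: case_prod_unfold)
    qed
    ultimately show "(\<Sum>(t, K)\<in>p. indicator Z t * norm (x (Sup K) - x (Inf K))) < e"
      by simp
  qed
qed

lemma has_vector_derivative_straddle:
  fixes x :: "real \<Rightarrow> 'a::real_normed_vector"
  assumes "(x has_vector_derivative x') (at t)" "e > 0"
  obtains d where "d > 0"
    "\<And>u v. u \<le> t \<Longrightarrow> t \<le> v \<Longrightarrow> \<bar>u - t\<bar> < d \<Longrightarrow> \<bar>v - t\<bar> < d \<Longrightarrow>
       norm (x v - x u - (v - u) *\<^sub>R x') \<le> e * (v - u)"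
proof -
  obtain d where "d > 0"
    and d: "\<forall>y\<in>UNIV. norm (y - t) < d \<longrightarrow> norm (x y - x t - (y - t) *\<^sub>R x') \<le> e * norm (y - t)"
    using assms unfolding has_vector_derivative_def has_derivative_within_alt by blast
  show ?thesis
  proof (rule that[OF \<open>d > 0\<close>])
    fix u v assume "u \<le> t" "t \<le> v" "\<bar>u - t\<bar> < d" "\<bar>v - t\<bar> < d"
    have "norm (x v - x u - (v - u) *\<^sub>R x')
        = norm ((x v - x t - (v - t) *\<^sub>R x') - (x u - x t - (u - t) *\<^sub>R x'))"
      by (simp add: algebra_simps)
    also have "\<dots> \<le> norm (x v - x t - (v - t) *\<^sub>R x') + norm (x u - x t - (u - t) *\<^sub>R x')"
      by (rule norm_triangle_ineq4)
    also have "\<dots> \<le> e * \<bar>v - t\<bar> + e * \<bar>u - t\<bar>"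
      using d \<open>\<bar>u - t\<bar> < d\<close> \<open>\<bar>v - t\<bar> < d\<close> by (intro add_mono) auto
    also have "\<dots> = e * (v - u)"
      using \<open>u \<le> t\<close> \<open>t \<le> v\<close> by (simp add: algebra_simps)
    finally show "norm (x v - x u - (v - u) *\<^sub>R x') \<le> e * (v - u)" .
  qed
qed

lemma has_vector_derivative_straddle_gauge:
  fixes x :: "real \<Rightarrow> 'a::real_normed_vector"
  assumes "\<forall>t\<in>T. (x has_vector_derivative x' t) (at t)" "e > 0"
  obtains \<gamma> where "gauge \<gamma>"
    "\<And>t u v. t \<in> T \<Longrightarrow> u \<le> t \<Longrightarrow> t \<le> v \<Longrightarrow> {u..v} \<subseteq> \<gamma> t \<Longrightarrow>
       norm (x v - x u - (v - u) *\<^sub>R x' t) \<le> e * (v - u)"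
proof -
  have "\<forall>t. \<exists>d>0. t \<in> T \<longrightarrow> (\<forall>u v. u \<le> t \<longrightarrow> t \<le> v \<longrightarrow> \<bar>u - t\<bar> < d \<longrightarrow> \<bar>v - t\<bar> < d \<longrightarrow>
      norm (x v - x u - (v - u) *\<^sub>R x' t) \<le> e * (v - u))"
  proof
    fix t show "\<exists>d>0. t \<in> T \<longrightarrow> (\<forall>u v. u \<le> t \<longrightarrow> t \<le> v \<longrightarrow> \<bar>u - t\<bar> < d \<longrightarrow> \<bar>v - t\<bar> < d \<longrightarrow>
      norm (x v - x u - (v - u) *\<^sub>R x' t) \<le> e * (v - u))"
    proof (cases "t \<in> T")
      case True
      then show ?thesis
        using has_vector_derivative_straddle[OF assms(1)[rule_format] \<open>e > 0\<close>] by (metis (no_types, lifting))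
    qed (auto intro: exI[of _ 1])
  qed
  then obtain d where d: "\<And>t. d t > 0" "\<And>t u v. t \<in> T \<Longrightarrow> u \<le> t \<Longrightarrow> t \<le> v \<Longrightarrow>
      \<bar>u - t\<bar> < d t \<Longrightarrow> \<bar>v - t\<bar> < d t \<Longrightarrow> norm (x v - x u - (v - u) *\<^sub>R x' t) \<le> e * (v - u)"
    by metis
  show ?thesis
  proof (rule that)
    show "gauge (\<lambda>t. ball t (d t))"
      using d(1) by (rule gauge_ball_dependent[rule_format])
    fix t u v assume "t \<in> T" "u \<le> t" "t \<le> v" "{u..v} \<subseteq> ball t (d t)"
    then have "u \<in> {u..v}" "v \<in> {u..v}" by auto
    then have "u \<in> ball t (d t)" "v \<in> ball t (d t)"
      using \<open>{u..v} \<subseteq> ball t (d t)\<close> by blast+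
    then show "norm (x v - x u - (v - u) *\<^sub>R x' t) \<le> e * (v - u)"
      using d(2)[OF \<open>t \<in> T\<close> \<open>u \<le> t\<close> \<open>t \<le> v\<close>] by (simp add: dist_real_def abs_minus_commute)
  qed
qed

lemma tagged_division_increment_sum_bound:
  fixes x x' :: "real \<Rightarrow> 'a::real_normed_vector"
  assumes "a \<le> b" "0 \<le> \<epsilon>" and p: "p tagged_division_of {a..b}" "\<gamma> fine p"
    and straddle: "\<And>t u v. t \<in> {a..b} - Z \<Longrightarrow> u \<le> t \<Longrightarrow> t \<le> v \<Longrightarrow> {u..v} \<subseteq> \<gamma> t \<Longrightarrow>
      norm (x v - x u - (v - u) *\<^sub>R x' t) \<le> \<epsilon> * (v - u)"
  shows "norm ((\<Sum>(t, K)\<in>p. interval_content K *\<^sub>R (if t \<in> Z then 0 else x' t)) - (x b - x a))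
    \<le> \<epsilon> * (b - a) + (\<Sum>(t, K)\<in>p. indicator Z t * norm (x (Sup K) - x (Inf K)))"
proof -
  have cell: "norm (interval_content K *\<^sub>R (if t \<in> Z then 0 else x' t) - (x (Sup K) - x (Inf K)))
      \<le> \<epsilon> * interval_content K + indicator Z t * norm (x (Sup K) - x (Inf K))" if "(t, K) \<in> p" for t K
  proof (cases "t \<in> Z")
    case False
    note K = tagged_division_of_real_intervalD[OF p(1) that, unfolded fst_conv snd_conv]
    have "{Inf K..Sup K} \<subseteq> \<gamma> t"
      using \<open>\<gamma> fine p\<close> that unfolding fine_def K(1)[symmetric] by blast
    then have "norm (x (Sup K) - x (Inf K) - (Sup K - Inf K) *\<^sub>R x' t) \<le> \<epsilon> * (Sup K - Inf K)"
      using False K(2-5) by (intro straddle) auto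
    moreover have "interval_content K = Sup K - Inf K"
      using K(2,3) by (subst K(1)) simp
    ultimately show ?thesis
      using False by (simp add: norm_minus_commute)
  next
    case True
    have "0 \<le> \<epsilon> * interval_content K"
      using \<open>0 \<le> \<epsilon>\<close> by simp
    then show ?thesis
      using True by (simp add: norm_minus_commute)
  qed
  have "norm ((\<Sum>(t, K)\<in>p. interval_content K *\<^sub>R (if t \<in> Z then 0 else x' t)) - (x b - x a))
      = norm (\<Sum>(t, K)\<in>p. interval_content K *\<^sub>R (if t \<in> Z then 0 else x' t) - (x (Sup K) - x (Inf K)))"
    using additive_tagged_division_1[OF \<open>a \<le> b\<close> p(1), of x] by (simp add: sum_subtractf case_prod_unfold)
  also have "\<dots> \<le> (\<Sum>(t, K)\<in>p. \<epsilon> * interval_content K + indicator Z t * norm (x (Sup K) - x (Inf K)))"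
    by (rule sum_norm_le) (use cell in auto)
  also have "\<dots> = \<epsilon> * (b - a) + (\<Sum>(t, K)\<in>p. indicator Z t * norm (x (Sup K) - x (Inf K)))"
    using additive_content_tagged_division[OF p(1)[folded box_real(2)]] \<open>a \<le> b\<close>
    by (simp add: sum.distrib case_prod_unfold flip: sum_distrib_left)
  finally show ?thesis .
qed

text \<open>Tags outside the null set \<open>Z\<close> are controlled by the straddle estimate; the cells tagged in \<open>Z\<close>
  have small total length for a fine enough division because \<open>Z\<close> is negligible, so absolute
  continuity controls the increments of \<open>x\<close> across them.\<close>

theorem fundamental_theorem_of_calculus_abs_continuous:
  fixes x x' :: "real \<Rightarrow> 'a::real_normed_vector"
  assumes "a \<le> b" "abs_continuous_on S x" "{a..b} \<subseteq> S"
    and "AE t in lborel. t \<in> {a<..<b} \<longrightarrow> (x has_vector_derivative x' t) (at t)"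
  shows "(x' has_integral (x b - x a)) {a..b}"
proof -
  obtain N where N: "\<And>t. t \<in> space lborel - N \<Longrightarrow> t \<in> {a<..<b} \<longrightarrow> (x has_vector_derivative x' t) (at t)"
    and "N \<in> null_sets lborel"
    by (fact AE_E3[OF assms(4)])
  define Z where "Z = N \<union> {a, b}"
  have "negligible Z"
    unfolding Z_def negligible_iff_null_sets
    using \<open>N \<in> null_sets lborel\<close> by (auto intro: null_sets_completionI)
  have derivative: "\<forall>t\<in>{a..b} - Z. (x has_vector_derivative x' t) (at t)"
    using N by (auto simp: Z_def)
  have "((\<lambda>t. if t \<in> Z then 0 else x' t) has_integral (x b - x a)) {a..b}"
    unfolding has_integral_real
  proof (intro allI impI)
    fix e :: real assume "e > 0"
    obtain \<delta> where "\<delta> > 0" and \<delta>: "\<And>p Z. p tagged_division_of {a..b} \<Longrightarrow>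
        (\<Sum>(t, K)\<in>p. interval_content K * indicator Z t) < \<delta> \<Longrightarrow>
        (\<Sum>(t, K)\<in>p. indicator Z t * norm (x (Sup K) - x (Inf K))) < e / 2"
      by (fact abs_continuous_on_tagged_division_bound[OF assms(2,3) half_gt_zero[OF \<open>e > 0\<close>]])
    have "(indicat_real Z has_integral 0) {a..b}"
      using \<open>negligible Z\<close> unfolding negligible ..
    from this[unfolded has_integral_real, rule_format, OF \<open>\<delta> > 0\<close>]
    obtain \<gamma>Z where "gauge \<gamma>Z" and \<gamma>Z: "\<And>p. p tagged_division_of {a..b} \<Longrightarrow> \<gamma>Z fine p \<Longrightarrow>
        norm ((\<Sum>(t, K)\<in>p. interval_content K *\<^sub>R indicat_real Z t) - 0) < \<delta>"
      by meson
    define \<epsilon> where "\<epsilon> = e / (2 * (b - a + 1))"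
    have "\<epsilon> > 0" using \<open>e > 0\<close> \<open>a \<le> b\<close> by (simp add: \<epsilon>_def)
    obtain \<gamma>' where "gauge \<gamma>'" and \<gamma>': "\<And>t u v. t \<in> {a..b} - Z \<Longrightarrow> u \<le> t \<Longrightarrow> t \<le> v \<Longrightarrow>
        {u..v} \<subseteq> \<gamma>' t \<Longrightarrow> norm (x v - x u - (v - u) *\<^sub>R x' t) \<le> \<epsilon> * (v - u)"
      by (fact has_vector_derivative_straddle_gauge[OF derivative \<open>\<epsilon> > 0\<close>])
    show "\<exists>\<gamma>. gauge \<gamma> \<and> (\<forall>p. p tagged_division_of {a..b} \<and> \<gamma> fine p \<longrightarrow>
        norm ((\<Sum>(t, K)\<in>p. interval_content K *\<^sub>R (if t \<in> Z then 0 else x' t)) - (x b - x a)) < e)"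
    proof (intro exI conjI allI impI)
      show "gauge (\<lambda>t. \<gamma>Z t \<inter> \<gamma>' t)"
        using \<open>gauge \<gamma>Z\<close> \<open>gauge \<gamma>'\<close> by (rule gauge_Int)
      fix p assume "p tagged_division_of {a..b} \<and> (\<lambda>t. \<gamma>Z t \<inter> \<gamma>' t) fine p"
      then have p: "p tagged_division_of {a..b}" and "\<gamma>Z fine p" "\<gamma>' fine p"
        by (auto simp: fine_Int)
      have "norm ((\<Sum>(t, K)\<in>p. interval_content K *\<^sub>R (if t \<in> Z then 0 else x' t)) - (x b - x a))
          \<le> \<epsilon> * (b - a) + (\<Sum>(t, K)\<in>p. indicator Z t * norm (x (Sup K) - x (Inf K)))"
        using \<open>a \<le> b\<close> \<open>\<epsilon> > 0\<close> p \<open>\<gamma>' fine p\<close> \<gamma>' by (intro tagged_division_increment_sum_bound) auto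
      also have "\<dots> < e / 2 + e / 2"
      proof (rule add_le_less_mono)
        show "\<epsilon> * (b - a) \<le> e / 2"
          using \<open>e > 0\<close> \<open>a \<le> b\<close> by (simp add: \<epsilon>_def field_simps)
        show "(\<Sum>(t, K)\<in>p. indicator Z t * norm (x (Sup K) - x (Inf K))) < e / 2"
          using \<delta>[OF p] \<gamma>Z[OF p \<open>\<gamma>Z fine p\<close>] by (simp add: case_prod_unfold)
      qed
      finally show "norm ((\<Sum>(t, K)\<in>p. interval_content K *\<^sub>R (if t \<in> Z then 0 else x' t)) - (x b - x a)) < e"
        by simp
    qed
  qed
  then show ?thesis
    by (rule has_integral_spike[OF \<open>negligible Z\<close>, rotated]) simp
qed

section \<open>Euler scheme for Lipschitz autonomous equations\<close>

lemma continuous_on_atLeast: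
  fixes f :: "real \<Rightarrow> 'a::topological_space"
  assumes "\<And>T. continuous_on {a..T} f"
  shows "continuous_on {a..} f"
  unfolding continuous_on_eq_continuous_within
proof
  fix t assume "t \<in> {a..}"
  then have "continuous (at t within {a..t + 1}) f"
    using assms[of "t + 1"] by (simp add: continuous_on_eq_continuous_within)
  moreover have "at t within {a..t + 1} = at t within {a..}"
    by (rule at_within_nhd[of _ "{..<t + 1}"]) auto
  ultimately show "continuous (at t within {a..}) f" by simp
qed

lemma discrete_gronwall:
  fixes e :: "nat \<Rightarrow> real"
  assumes "e 0 = 0" "0 \<le> a" "0 \<le> c"
    and step: "\<And>n. n < N \<Longrightarrow> e (Suc n) \<le> (1 + a) * e n + c"
  shows "n \<le> N \<Longrightarrow> e n \<le> real n * c * (1 + a) ^ n"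
proof (induction n)
  case (Suc n)
  have "e (Suc n) \<le> (1 + a) * e n + c"
    using step Suc.prems by simp
  also have "\<dots> \<le> (1 + a) * (real n * c * (1 + a) ^ n) + c"
    using Suc \<open>0 \<le> a\<close> by (intro add_right_mono mult_left_mono) simp_all
  also have "\<dots> \<le> (1 + a) * (real n * c * (1 + a) ^ n) + c * (1 + a) ^ Suc n"
    using mult_left_mono[OF one_le_power[of "1 + a" "Suc n"] \<open>0 \<le> c\<close>] \<open>0 \<le> a\<close> by simp
  also have "\<dots> = real (Suc n) * c * (1 + a) ^ Suc n"
    by (simp add: algebra_simps)
  finally show ?case .
qed (simp add: assms(1))

locale lipschitz_ode_solution =
  fixes V :: "'a::banach set" and \<Phi> :: "'a \<Rightarrow> 'a" and L :: real and x :: "real \<Rightarrow> 'a"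
  assumes lipschitz: "L-lipschitz_on V \<Phi>"
    and solution_in: "\<And>t. 0 \<le> t \<Longrightarrow> x t \<in> V"
    and solution_has_integral:
      "\<And>s t. 0 \<le> s \<Longrightarrow> s \<le> t \<Longrightarrow> ((\<lambda>r. \<Phi> (x r)) has_integral (x t - x s)) {s..t}"
begin

lemma L_nonneg: "0 \<le> L"
  using lipschitz by (rule lipschitz_on_nonneg)

lemma lipschitz_norm: "y \<in> V \<Longrightarrow> z \<in> V \<Longrightarrow> norm (\<Phi> y - \<Phi> z) \<le> L * norm (y - z)"
  using lipschitz_onD[OF lipschitz] by (simp add: dist_norm)

lemma continuous_on_solution: "continuous_on {0..} x"
proof (rule continuous_on_atLeast)
  fix T
  show "continuous_on {0..T} x"
  proof (cases "0 \<le> T")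
    case True
    have "(\<lambda>r. \<Phi> (x r)) integrable_on {0..T}"
      using solution_has_integral[OF order_refl True] by blast
    then have "continuous_on {0..T} (\<lambda>t. x 0 + integral {0..t} (\<lambda>r. \<Phi> (x r)))"
      by (intro continuous_intros indefinite_integral_continuous_1)
    moreover have "x 0 + integral {0..t} (\<lambda>r. \<Phi> (x r)) = x t" if "t \<in> {0..T}" for t
      using integral_unique[OF solution_has_integral[of 0 t]] that by simp
    ultimately show ?thesis
      by (rule continuous_on_eq)
  qed simp
qed

lemma continuous_on_vector_field_solution: "continuous_on {0..} (\<lambda>t. \<Phi> (x t))"
  using solution_in
  by (intro continuous_on_compose2[OF lipschitz_on_continuous_on[OF lipschitz] continuous_on_solution]) auto

lemma vector_field_solution_bounded:
  obtains B where "\<And>t. t \<in> {0..T} \<Longrightarrow> norm (\<Phi> (x t)) \<le> B"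
proof -
  have "compact ((\<lambda>t. \<Phi> (x t)) ` {0..T})"
    using continuous_on_subset[OF continuous_on_vector_field_solution]
    by (intro compact_continuous_image) auto
  then have "bounded ((\<lambda>t. \<Phi> (x t)) ` {0..T})"
    by (rule compact_imp_bounded)
  then obtain B where "\<forall>y \<in> (\<lambda>t. \<Phi> (x t)) ` {0..T}. norm y \<le> B"
    unfolding bounded_iff by meson
  then show ?thesis
    using that[of B] by auto
qed

lemma solution_increment_le:
  assumes "0 \<le> s" "s \<le> t" "t \<le> T" and B: "\<And>r. r \<in> {0..T} \<Longrightarrow> norm (\<Phi> (x r)) \<le> B"
  shows "norm (x t - x s) \<le> B * (t - s)"
proof -
  have "norm (\<Phi> (x s)) \<le> B"
    using assms by (intro B) auto
  then have "0 \<le> B"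
    by (rule order_trans[OF norm_ge_zero])
  moreover have "norm (\<Phi> (x r)) \<le> B" if "r \<in> {s..t}" for r
    using that assms by (intro B) auto
  ultimately show ?thesis
    using has_integral_bound_real[OF _ _ solution_has_integral[OF assms(1,2)], of B "{}"] \<open>s \<le> t\<close>
    by simp
qed

lemma solution_local_error:
  assumes "0 \<le> s" "0 \<le> h" "s + h \<le> T" and B: "\<And>r. r \<in> {0..T} \<Longrightarrow> norm (\<Phi> (x r)) \<le> B"
  shows "norm (x (s + h) - x s - h *\<^sub>R \<Phi> (x s)) \<le> L * B * h\<^sup>2"
proof -
  have "norm (\<Phi> (x s)) \<le> B"
    using assms by (intro B) auto
  then have "0 \<le> B"
    by (rule order_trans[OF norm_ge_zero])
  have "((\<lambda>r. \<Phi> (x r) - \<Phi> (x s)) has_integral (x (s + h) - x s - h *\<^sub>R \<Phi> (x s))) {s..s + h}"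
    using has_integral_diff[OF solution_has_integral[of s "s + h"] has_integral_const_real[of "\<Phi> (x s)" s "s + h"]]
      assms(1,2) by simp
  moreover have "norm (\<Phi> (x r) - \<Phi> (x s)) \<le> L * B * h" if "r \<in> {s..s + h}" for r
  proof -
    have "norm (\<Phi> (x r) - \<Phi> (x s)) \<le> L * norm (x r - x s)"
      using that assms(1) by (intro lipschitz_norm solution_in) auto
    also have "\<dots> \<le> L * (B * (r - s))"
      using that assms L_nonneg by (intro mult_left_mono solution_increment_le[OF _ _ _ B]) auto
    also have "\<dots> \<le> L * (B * h)"
      using that \<open>0 \<le> B\<close> L_nonneg by (intro mult_left_mono) auto
    finally show ?thesis by simp
  qed
  moreover have "0 \<le> L * B * h"
    using \<open>0 \<le> B\<close> assms(2) L_nonneg by simp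
  ultimately have "norm (x (s + h) - x s - h *\<^sub>R \<Phi> (x s)) \<le> L * B * h * interval_content {s..s + h}"
    by (intro has_integral_bound_real[where S="{}"]) auto
  then show ?thesis
    using assms(2) by (simp add: power2_eq_square mult.assoc)
qed

lemma euler_step_error:
  assumes "0 < h" "y \<in> V" "0 \<le> s" "s + h \<le> T" and B: "\<And>r. r \<in> {0..T} \<Longrightarrow> norm (\<Phi> (x r)) \<le> B"
  shows "norm (y + h *\<^sub>R \<Phi> y - x (s + h)) \<le> (1 + h * L) * norm (y - x s) + L * B * h\<^sup>2"
proof -
  have "y + h *\<^sub>R \<Phi> y - x (s + h)
      = (y - x s) + h *\<^sub>R (\<Phi> y - \<Phi> (x s)) - (x (s + h) - x s - h *\<^sub>R \<Phi> (x s))"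
    by (simp add: algebra_simps)
  also have "norm \<dots> \<le> norm (y - x s) + h * norm (\<Phi> y - \<Phi> (x s)) + norm (x (s + h) - x s - h *\<^sub>R \<Phi> (x s))"
    using \<open>0 < h\<close> norm_triangle_ineq4 norm_triangle_ineq norm_scaleR
    by (smt (verit))
  also have "\<dots> \<le> norm (y - x s) + h * (L * norm (y - x s)) + L * B * h\<^sup>2"
  proof (intro add_mono mult_left_mono order_refl)
    show "norm (\<Phi> y - \<Phi> (x s)) \<le> L * norm (y - x s)"
      using assms(2,3) by (intro lipschitz_norm solution_in)
    show "norm (x (s + h) - x s - h *\<^sub>R \<Phi> (x s)) \<le> L * B * h\<^sup>2"
      using assms(1,3,4) B by (intro solution_local_error) auto
  qed (use \<open>0 < h\<close> in simp)
  finally show ?thesis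
    by (simp add: algebra_simps)
qed

lemma euler_global_error:
  assumes "0 < h" and y: "y 0 = x 0" "\<And>n. y (Suc n) = y n + h *\<^sub>R \<Phi> (y n)" "\<And>n. y n \<in> V"
    and B: "\<And>t. t \<in> {0..T} \<Longrightarrow> norm (\<Phi> (x t)) \<le> B" and "real n * h \<le> T"
  shows "norm (y n - x (real n * h)) \<le> T * L * B * exp (L * T) * h"
proof -
  have "0 \<le> real n * h"
    using \<open>0 < h\<close> by simp
  then have "0 \<le> T"
    using \<open>real n * h \<le> T\<close> by linarith
  then have "norm (\<Phi> (x 0)) \<le> B"
    using B by simp
  then have "0 \<le> B"
    by (rule order_trans[OF norm_ge_zero])
  have step: "norm (y (Suc k) - x (real (Suc k) * h)) \<le> (1 + h * L) * norm (y k - x (real k * h)) + L * B * h\<^sup>2"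
    if "k < n" for k
  proof -
    have "real (Suc k) * h \<le> real n * h"
      using that \<open>0 < h\<close> by (intro mult_right_mono) auto
    then have "real k * h + h \<le> T"
      using \<open>real n * h \<le> T\<close> by (simp add: algebra_simps)
    moreover have "0 \<le> real k * h"
      using \<open>0 < h\<close> by simp
    ultimately have "norm (y k + h *\<^sub>R \<Phi> (y k) - x (real k * h + h))
        \<le> (1 + h * L) * norm (y k - x (real k * h)) + L * B * h\<^sup>2"
      using euler_step_error[OF \<open>0 < h\<close> y(3) _ _ B] by blast
    then show ?thesis
      by (simp add: y(2) algebra_simps)
  qed
  have "norm (y n - x (real n * h)) \<le> real n * (L * B * h\<^sup>2) * (1 + h * L) ^ n"
    using y(1) \<open>0 < h\<close> \<open>0 \<le> B\<close> L_nonneg step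
    by (intro discrete_gronwall[where e="\<lambda>k. norm (y k - x (real k * h))" and N=n]) auto
  also have "\<dots> = (real n * h) * (L * B * h) * (1 + h * L) ^ n"
    by (simp add: power2_eq_square mult_ac)
  also have "\<dots> \<le> T * (L * B * h) * exp (L * T)"
  proof (intro mult_mono)
    have "(1 + h * L) ^ n \<le> exp (h * L) ^ n"
      using \<open>0 < h\<close> L_nonneg by (intro power_mono) (auto simp: exp_ge_add_one_self)
    also have "\<dots> = exp (L * (real n * h))"
      by (simp add: exp_of_nat_mult[symmetric] mult_ac)
    also have "\<dots> \<le> exp (L * T)"
      using \<open>real n * h \<le> T\<close> L_nonneg by (simp add: mult_left_mono)
    finally show "(1 + h * L) ^ n \<le> exp (L * T)" .
  qed (use \<open>real n * h \<le> T\<close> \<open>0 < h\<close> \<open>0 \<le> B\<close> \<open>0 \<le> T\<close> L_nonneg in auto)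
  finally show ?thesis
    by (simp add: mult_ac)
qed

lemma euler_observable_error:
  fixes F :: "'a \<Rightarrow> 'b::metric_space" and y :: "real \<Rightarrow> nat \<Rightarrow> 'a"
  assumes F: "C-lipschitz_on V F"
    and y: "\<And>h. 0 < h \<Longrightarrow> y h 0 = x 0" "\<And>h n. 0 < h \<Longrightarrow> y h (Suc n) = y h n + h *\<^sub>R \<Phi> (y h n)"
      "\<And>h n. 0 < h \<Longrightarrow> y h n \<in> V"
  shows "\<exists>K. \<forall>h n t. 0 < h \<longrightarrow> real n * h + h \<le> T \<longrightarrow> t \<in> {real n * h..real n * h + h} \<longrightarrow>
    dist (F (y h n)) (F (x t)) \<le> K * h"
proof -
  obtain B where B: "\<And>t. t \<in> {0..T} \<Longrightarrow> norm (\<Phi> (x t)) \<le> B"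
    using vector_field_solution_bounded by blast
  have "dist (F (y h n)) (F (x t)) \<le> C * ((T * L * B * exp (L * T) + B) * h)"
    if "0 < h" "real n * h + h \<le> T" "t \<in> {real n * h..real n * h + h}" for h n t
  proof -
    have "0 \<le> real n * h" "real n * h \<le> t" "t \<le> real n * h + h"
      using that by auto
    have "t \<le> T"
      using \<open>t \<le> real n * h + h\<close> \<open>real n * h + h \<le> T\<close> by linarith
    have "norm (\<Phi> (x t)) \<le> B"
      using \<open>0 \<le> real n * h\<close> \<open>real n * h \<le> t\<close> \<open>t \<le> T\<close> by (intro B) auto
    then have "0 \<le> B"
      by (rule order_trans[OF norm_ge_zero])
    have "norm (y h n - x t) \<le> norm (y h n - x (real n * h)) + norm (x t - x (real n * h))"
      using norm_triangle_ineq4[of "y h n - x (real n * h)" "x t - x (real n * h)"] by simp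
    also have "\<dots> \<le> T * L * B * exp (L * T) * h + B * h"
    proof (rule add_mono)
      show "norm (y h n - x (real n * h)) \<le> T * L * B * exp (L * T) * h"
        using B \<open>real n * h + h \<le> T\<close> \<open>0 < h\<close> by (intro euler_global_error[OF \<open>0 < h\<close> y]) auto
      have "norm (x t - x (real n * h)) \<le> B * (t - real n * h)"
        using \<open>0 \<le> real n * h\<close> \<open>real n * h \<le> t\<close> \<open>t \<le> T\<close> B by (rule solution_increment_le)
      also have "\<dots> \<le> B * h"
        using \<open>0 \<le> B\<close> \<open>t \<le> real n * h + h\<close> by (intro mult_left_mono) auto
      finally show "norm (x t - x (real n * h)) \<le> B * h" .
    qed
    finally have "dist (y h n) (x t) \<le> (T * L * B * exp (L * T) + B) * h"
      by (simp add: dist_norm algebra_simps)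
    moreover have "y h n \<in> V" "x t \<in> V"
      using y(3)[OF \<open>0 < h\<close>] solution_in \<open>0 \<le> real n * h\<close> \<open>real n * h \<le> t\<close> by auto
    ultimately show ?thesis
      using lipschitz_onD[OF F] lipschitz_on_nonneg[OF F] by (meson mult_left_mono order_trans)
  qed
  then show ?thesis
    by (metis mult.assoc)
qed

end

section \<open>Discounted Riemann sums\<close>

lemma exp_minus_le_one_minus_plus_square:
  fixes y :: real
  assumes "0 \<le> y"
  shows "exp (- y) \<le> 1 - y + y\<^sup>2"
proof -
  have "exp (- y) = 1 / exp y"
    by (simp add: exp_minus field_simps)
  also have "\<dots> \<le> 1 / (1 + y)"
    using assms by (intro divide_left_mono) (auto simp: exp_ge_add_one_self add_pos_nonneg)
  also have "\<dots> = 1 - y + y\<^sup>2 / (1 + y)"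
    using assms by (simp add: field_simps power2_eq_square)
  also have "\<dots> \<le> 1 - y + y\<^sup>2"
    using assms by (simp add: pos_divide_le_eq mult_le_cancel_left1 add_pos_nonneg)
  finally show ?thesis .
qed

lemma abs_exp_minus_diff_le:
  fixes s t :: real
  assumes "0 \<le> s" "s \<le> t"
  shows "\<bar>exp (- s) - exp (- t)\<bar> \<le> t - s"
proof -
  define w where "w = 1 - exp (s - t)"
  have "exp (- s) - exp (- t) = exp (- s) * w"
    by (simp add: w_def algebra_simps flip: exp_add)
  moreover have "0 \<le> w"
    using assms by (simp add: w_def)
  moreover have "w \<le> t - s"
    using exp_ge_add_one_self[of "s - t"] unfolding w_def by linarith
  moreover have "exp (- s) * w \<le> w"
    using assms \<open>0 \<le> w\<close> by (intro mult_left_le_one_le) auto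
  ultimately show ?thesis
    by simp
qed

lemma discount_factor_error:
  fixes \<rho> h t T :: real
  assumes "0 < \<rho>" "0 < h" "\<rho> * h \<le> 1" "real n * h \<le> t" "t \<le> real n * h + h" "real n * h \<le> T"
  shows "\<bar>(1 - \<rho> * h) ^ n - exp (- \<rho> * t)\<bar> \<le> (\<rho>\<^sup>2 * T + \<rho>) * h"
proof -
  have "\<bar>(1 - \<rho> * h) ^ n - exp (- (\<rho> * h)) ^ n\<bar> \<le> real n * \<bar>(1 - \<rho> * h) - exp (- (\<rho> * h))\<bar>"
    using norm_power_diff[of "1 - \<rho> * h" "exp (- (\<rho> * h))" n] assms(1-3) by simp
  also have "\<dots> \<le> real n * (\<rho> * h)\<^sup>2"
    using exp_minus_le_one_minus_plus_square[of "\<rho> * h"] exp_ge_add_one_self[of "- (\<rho> * h)"] assms(1,2)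
    by (intro mult_left_mono) auto
  also have "\<dots> = (real n * h) * \<rho>\<^sup>2 * h"
    by (simp add: power2_eq_square)
  also have "\<dots> \<le> T * \<rho>\<^sup>2 * h"
    using assms by (intro mult_right_mono) auto
  finally have "\<bar>(1 - \<rho> * h) ^ n - exp (- \<rho> * (real n * h))\<bar> \<le> T * \<rho>\<^sup>2 * h"
    by (simp add: exp_of_nat_mult[symmetric] mult_ac)
  moreover have "\<bar>exp (- \<rho> * (real n * h)) - exp (- \<rho> * t)\<bar> \<le> \<rho> * h"
  proof -
    have "\<bar>exp (- (\<rho> * (real n * h))) - exp (- (\<rho> * t))\<bar> \<le> \<rho> * t - \<rho> * (real n * h)"
      using assms by (intro abs_exp_minus_diff_le) (auto intro: mult_left_mono)
    also have "\<dots> \<le> \<rho> * h"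
      using mult_left_mono[of "t - real n * h" h \<rho>] assms by (simp add: algebra_simps)
    finally show ?thesis by simp
  qed
  ultimately show ?thesis
    by (simp add: algebra_simps power2_eq_square)
qed

lemma discounted_series_tail:
  fixes a :: "nat \<Rightarrow> real"
  assumes "0 < \<rho>" "0 < h" "\<rho> * h \<le> 1" and a: "\<And>n. \<bar>a n\<bar> \<le> M"
  shows "\<bar>h * (\<Sum>n. (1 - \<rho> * h) ^ n * a n) - h * (\<Sum>n<N. (1 - \<rho> * h) ^ n * a n)\<bar>
    \<le> M * exp (- \<rho> * (real N * h)) / \<rho>"
proof -
  define \<beta> where "\<beta> = 1 - \<rho> * h"
  have "0 \<le> \<beta>" "\<beta> < 1"
    using assms(1-3) by (auto simp: \<beta>_def)
  then have geometric: "summable (\<lambda>n. \<beta> ^ n)"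
    by (intro summable_geometric) simp
  have bound: "norm (\<beta> ^ n * a n) \<le> M * \<beta> ^ n" for n
    using mult_left_mono[OF a[of n], of "\<beta> ^ n"] \<open>0 \<le> \<beta>\<close> by (simp add: abs_mult mult_ac)
  have "summable (\<lambda>n. \<beta> ^ n * a n)"
    by (rule summable_comparison_test'[OF summable_mult[OF geometric] bound])
  then have "h * (\<Sum>n. \<beta> ^ n * a n) - h * (\<Sum>n<N. \<beta> ^ n * a n) = h * (\<Sum>n. \<beta> ^ (n + N) * a (n + N))"
    by (subst suminf_split_initial_segment[of _ N]) (simp_all add: algebra_simps)
  then have "\<bar>h * (\<Sum>n. \<beta> ^ n * a n) - h * (\<Sum>n<N. \<beta> ^ n * a n)\<bar> = h * \<bar>\<Sum>n. \<beta> ^ (n + N) * a (n + N)\<bar>"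
    using assms(2) by (simp add: abs_mult)
  also have "\<dots> \<le> h * (\<Sum>n. M * \<beta> ^ N * \<beta> ^ n)"
  proof (intro mult_left_mono norm_suminf_le[where 'a=real, unfolded real_norm_def])
    show "\<bar>\<beta> ^ (n + N) * a (n + N)\<bar> \<le> M * \<beta> ^ N * \<beta> ^ n" for n
      using bound[of "n + N"] by (simp add: power_add mult_ac)
    show "summable (\<lambda>n. M * \<beta> ^ N * \<beta> ^ n)"
      by (rule summable_mult[OF geometric])
  qed (use assms(2) in simp)
  also have "\<dots> = M * \<beta> ^ N / \<rho>"
    using \<open>\<beta> < 1\<close> \<open>0 \<le> \<beta>\<close> assms(2) by (simp add: suminf_mult suminf_geometric geometric \<beta>_def)
  also have "\<dots> \<le> M * exp (- \<rho> * (real N * h)) / \<rho>"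
  proof -
    have "\<beta> ^ N \<le> exp (- (\<rho> * h)) ^ N"
      using \<open>0 \<le> \<beta>\<close> exp_ge_add_one_self[of "- (\<rho> * h)"] by (intro power_mono) (auto simp: \<beta>_def)
    then have "\<beta> ^ N \<le> exp (- \<rho> * (real N * h))"
      by (simp add: exp_of_nat_mult[symmetric] mult_ac)
    moreover have "0 \<le> M" using a[of 0] by simp
    ultimately show ?thesis
      using assms(1) by (intro divide_right_mono mult_left_mono) auto
  qed
  finally show ?thesis
    by (simp add: \<beta>_def)
qed

lemma discounted_integral_tail:
  fixes c :: "real \<Rightarrow> real"
  assumes "0 < \<rho>" "continuous_on {0..} c" and c: "\<And>t. 0 \<le> t \<Longrightarrow> \<bar>c t\<bar> \<le> M" and "0 \<le> A"
  shows "\<bar>integral {0..} (\<lambda>t. c t * exp (- \<rho> * t)) - integral {0..A} (\<lambda>t. c t * exp (- \<rho> * t))\<bar>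
    \<le> M * exp (- \<rho> * A) / \<rho>"
proof -
  define H where "H t = c t * exp (- \<rho> * t)" for t
  have cont: "continuous_on {0..} H"
    unfolding H_def by (intro continuous_intros assms(2))
  have majorant: "((\<lambda>t. M * exp (- \<rho> * t)) has_integral M * (exp (- \<rho> * A) / \<rho>)) {A..}"
    by (rule has_integral_mult_right[OF has_integral_exp_minus_to_infinity[OF assms(1)]])
  have bound: "\<bar>H t\<bar> \<le> M * exp (- \<rho> * t)" if "t \<in> {A..}" for t
    using c[of t] that \<open>0 \<le> A\<close> by (simp add: H_def abs_mult mult_right_mono)
  have "continuous_on {A..} H"
    using \<open>0 \<le> A\<close> by (intro continuous_on_subset[OF cont]) auto
  moreover have "{A..} \<in> sets lebesgue"
    by simp
  ultimately have "H \<in> borel_measurable (lebesgue_on {A..})"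
    by (rule continuous_imp_measurable_on_sets_lebesgue)
  then have tail: "H integrable_on {A..}"
    using has_integral_integrable[OF majorant] bound \<open>{A..} \<in> sets lebesgue\<close>
    by (rule measurable_bounded_by_integrable_imp_integrable_real)
  have head: "H integrable_on {0..A}"
    using continuous_on_subset[OF cont] by (intro integrable_continuous_real) auto
  have "{0..A} \<inter> {A..} = {A}" "{0..A} \<union> {A..} = {0..}"
    using \<open>0 \<le> A\<close> by auto
  then have "integral {0..} H = integral {0..A} H + integral {A..} H"
    using integral_Un[OF head tail] by simp
  moreover have "norm (integral {A..} H) \<le> integral {A..} (\<lambda>t. M * exp (- \<rho> * t))"
    using Henstock_Kurzweil_Integration.integral_norm_bound_integral[OF tail has_integral_integrable[OF majorant]]
      bound by simp
  ultimately show ?thesis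
    using integral_unique[OF majorant] by (simp add: H_def[abs_def])
qed

lemma discounted_partial_sum_error:
  fixes a :: "nat \<Rightarrow> real" and c :: "real \<Rightarrow> real"
  assumes "0 < \<rho>" "0 < h" "\<rho> * h \<le> 1" "continuous_on {0..} c" and c: "\<And>t. 0 \<le> t \<Longrightarrow> \<bar>c t\<bar> \<le> M"
    and a: "\<And>n t. real n * h + h \<le> T \<Longrightarrow> t \<in> {real n * h..real n * h + h} \<Longrightarrow> \<bar>a n - c t\<bar> \<le> K * h"
  shows "real N * h \<le> T \<Longrightarrow>
    \<bar>h * (\<Sum>n<N. (1 - \<rho> * h) ^ n * a n) - integral {0..real N * h} (\<lambda>t. c t * exp (- \<rho> * t))\<bar>
      \<le> real N * h * ((K + M * (\<rho>\<^sup>2 * T + \<rho>)) * h)"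
proof (induction N)
  case (Suc N)
  define s where "s = real N * h"
  define H where "H t = c t * exp (- \<rho> * t)" for t
  have "0 \<le> s" "s + h \<le> T"
    using Suc.prems \<open>0 < h\<close> by (simp_all add: s_def algebra_simps)
  have cont: "continuous_on {0..s + h} H"
    using continuous_on_subset[OF assms(4)] unfolding H_def by (intro continuous_intros) auto
  have cell: "\<bar>(1 - \<rho> * h) ^ N * a N - H t\<bar> \<le> (K + M * (\<rho>\<^sup>2 * T + \<rho>)) * h" if "t \<in> {s..s + h}" for t
  proof -
    have "0 \<le> t" "0 \<le> M"
      using that \<open>0 \<le> s\<close> c[of 0] by auto
    have "0 \<le> (1 - \<rho> * h) ^ N" "(1 - \<rho> * h) ^ N \<le> 1"
      using assms(1-3) by (auto intro: power_le_one)
    then have "\<bar>(1 - \<rho> * h) ^ N * (a N - c t)\<bar> \<le> \<bar>a N - c t\<bar>"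
      by (simp add: abs_mult mult_left_le_one_le)
    also have "\<dots> \<le> K * h"
      using a[of N t] that \<open>s + h \<le> T\<close> by (simp add: s_def)
    finally have "\<bar>(1 - \<rho> * h) ^ N * (a N - c t)\<bar> \<le> K * h" .
    moreover have "\<bar>c t * ((1 - \<rho> * h) ^ N - exp (- \<rho> * t))\<bar> \<le> M * ((\<rho>\<^sup>2 * T + \<rho>) * h)"
    proof -
      have "\<bar>(1 - \<rho> * h) ^ N - exp (- \<rho> * t)\<bar> \<le> (\<rho>\<^sup>2 * T + \<rho>) * h"
        using that \<open>s + h \<le> T\<close> assms(1-3) by (intro discount_factor_error) (auto simp: s_def)
      then show ?thesis
        unfolding abs_mult using c[OF \<open>0 \<le> t\<close>] \<open>0 \<le> M\<close> by (intro mult_mono) auto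
    qed
    moreover have "\<bar>(1 - \<rho> * h) ^ N * a N - H t\<bar>
        \<le> \<bar>(1 - \<rho> * h) ^ N * (a N - c t)\<bar> + \<bar>c t * ((1 - \<rho> * h) ^ N - exp (- \<rho> * t))\<bar>"
      unfolding H_def by (rule order_trans[OF eq_refl abs_triangle_ineq]) (simp add: algebra_simps)
    moreover have "(K + M * (\<rho>\<^sup>2 * T + \<rho>)) * h = K * h + M * ((\<rho>\<^sup>2 * T + \<rho>) * h)"
      by (simp add: algebra_simps)
    ultimately show ?thesis
      by linarith
  qed
  have "H integrable_on {s..s + h}"
    using continuous_on_subset[OF cont] \<open>0 \<le> s\<close> by (intro integrable_continuous_real) auto
  from has_integral_diff[OF has_integral_const_real integrable_integral[OF this]]
  have "((\<lambda>t. (1 - \<rho> * h) ^ N * a N - H t) has_integral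
      h * ((1 - \<rho> * h) ^ N * a N) - integral {s..s + h} H) {s..s + h}"
    using \<open>0 < h\<close> by simp
  moreover have "0 \<le> (K + M * (\<rho>\<^sup>2 * T + \<rho>)) * h"
    using cell[of s] \<open>0 < h\<close> by (auto intro: order_trans[OF abs_ge_zero])
  ultimately have "norm (h * ((1 - \<rho> * h) ^ N * a N) - integral {s..s + h} H)
      \<le> (K + M * (\<rho>\<^sup>2 * T + \<rho>)) * h * interval_content {s..s + h}"
    using cell by (intro has_integral_bound_real[where S="{}"]) auto
  then have "\<bar>h * ((1 - \<rho> * h) ^ N * a N) - integral {s..s + h} H\<bar> \<le> (K + M * (\<rho>\<^sup>2 * T + \<rho>)) * h * h"
    using \<open>0 < h\<close> by simp
  moreover have "integral {0..s} H + integral {s..s + h} H = integral {0..s + h} H"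
    using \<open>0 \<le> s\<close> \<open>0 < h\<close> by (intro Henstock_Kurzweil_Integration.integral_combine integrable_continuous_real cont) auto
  moreover have "\<bar>h * (\<Sum>n<N. (1 - \<rho> * h) ^ n * a n) - integral {0..s} H\<bar> \<le> s * ((K + M * (\<rho>\<^sup>2 * T + \<rho>)) * h)"
    unfolding H_def s_def using Suc \<open>s + h \<le> T\<close> \<open>0 < h\<close> by (simp add: s_def)
  moreover have "real (Suc N) * h = s + h"
    by (simp add: s_def algebra_simps)
  ultimately show ?case
    unfolding H_def[symmetric] by (simp add: algebra_simps)
qed simp

lemma discounted_sum_integral_error:
  fixes a :: "nat \<Rightarrow> real" and c :: "real \<Rightarrow> real"
  assumes "0 < \<rho>" "0 < h" "h \<le> 1" "\<rho> * h \<le> 1" "0 \<le> T" "continuous_on {0..} c"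
    and c: "\<And>t. 0 \<le> t \<Longrightarrow> \<bar>c t\<bar> \<le> M" and a: "\<And>n. \<bar>a n\<bar> \<le> M"
    and approx: "\<And>n t. real n * h + h \<le> T + 1 \<Longrightarrow> t \<in> {real n * h..real n * h + h} \<Longrightarrow> \<bar>a n - c t\<bar> \<le> K * h"
  shows "\<bar>h * (\<Sum>n. (1 - \<rho> * h) ^ n * a n) - integral {0..} (\<lambda>t. c t * exp (- \<rho> * t))\<bar>
    \<le> 2 * M * exp (- \<rho> * T) / \<rho> + (T + 1) * ((K + M * (\<rho>\<^sup>2 * (T + 1) + \<rho>)) * h)"
proof -
  define N where "N = nat \<lceil>T / h\<rceil>" \<comment> \<open>first grid index with \<open>T \<le> N h\<close>\<close>
  have "T / h \<le> real N" "real N \<le> T / h + 1"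
    using \<open>0 \<le> T\<close> \<open>0 < h\<close> of_int_ceiling_le_add_one[of "T / h"] by (auto simp: N_def)
  then have "T \<le> real N * h" "real N * h \<le> T + 1"
    using \<open>0 < h\<close> \<open>h \<le> 1\<close> by (auto simp: field_simps)
  have "0 \<le> K + M * (\<rho>\<^sup>2 * (T + 1) + \<rho>)"
  proof -
    have "0 \<le> K * h"
      using approx[of 0 0] \<open>0 < h\<close> \<open>h \<le> 1\<close> \<open>0 \<le> T\<close> by (auto intro: order_trans[OF abs_ge_zero])
    moreover have "0 \<le> M"
      using a[of 0] by simp
    ultimately show ?thesis
      using \<open>0 < h\<close> \<open>0 < \<rho>\<close> \<open>0 \<le> T\<close> by (simp add: zero_le_mult_iff)
  qed
  have "exp (- \<rho> * (real N * h)) \<le> exp (- \<rho> * T)"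
    using \<open>T \<le> real N * h\<close> \<open>0 < \<rho>\<close> by simp
  then have tails: "M * exp (- \<rho> * (real N * h)) / \<rho> \<le> M * exp (- \<rho> * T) / \<rho>"
    using a[of 0] \<open>0 < \<rho>\<close> by (intro divide_right_mono mult_left_mono) auto
  have "\<bar>h * (\<Sum>n. (1 - \<rho> * h) ^ n * a n) - h * (\<Sum>n<N. (1 - \<rho> * h) ^ n * a n)\<bar>
      \<le> M * exp (- \<rho> * (real N * h)) / \<rho>"
    using assms(1,2,4) a by (rule discounted_series_tail)
  moreover have "\<bar>h * (\<Sum>n<N. (1 - \<rho> * h) ^ n * a n) - integral {0..real N * h} (\<lambda>t. c t * exp (- \<rho> * t))\<bar>
      \<le> real N * h * ((K + M * (\<rho>\<^sup>2 * (T + 1) + \<rho>)) * h)"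
    using assms(1,2,4,6) c approx \<open>real N * h \<le> T + 1\<close> by (rule discounted_partial_sum_error)
  moreover have "\<bar>integral {0..} (\<lambda>t. c t * exp (- \<rho> * t)) - integral {0..real N * h} (\<lambda>t. c t * exp (- \<rho> * t))\<bar>
      \<le> M * exp (- \<rho> * (real N * h)) / \<rho>"
    using assms(1,6) c \<open>0 < h\<close> by (intro discounted_integral_tail) auto
  moreover have "real N * h * ((K + M * (\<rho>\<^sup>2 * (T + 1) + \<rho>)) * h)
      \<le> (T + 1) * ((K + M * (\<rho>\<^sup>2 * (T + 1) + \<rho>)) * h)"
    using \<open>real N * h \<le> T + 1\<close> \<open>0 \<le> K + M * (\<rho>\<^sup>2 * (T + 1) + \<rho>)\<close> \<open>0 < h\<close>
    by (intro mult_right_mono) auto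
  ultimately show ?thesis
    using tails by linarith
qed

theorem discounted_sum_tendsto_integral:
  fixes a :: "real \<Rightarrow> nat \<Rightarrow> real" and c :: "real \<Rightarrow> real"
  assumes "0 < \<rho>" "continuous_on {0..} c"
    and c: "\<And>t. 0 \<le> t \<Longrightarrow> \<bar>c t\<bar> \<le> M" and a: "\<And>h n. 0 < h \<Longrightarrow> \<bar>a h n\<bar> \<le> M"
    and approx: "\<And>T. \<exists>K. \<forall>h n t. 0 < h \<longrightarrow> real n * h + h \<le> T \<longrightarrow> t \<in> {real n * h..real n * h + h} \<longrightarrow>
      \<bar>a h n - c t\<bar> \<le> K * h"
  shows "((\<lambda>h. h * (\<Sum>n. (1 - \<rho> * h) ^ n * a h n)) \<longlongrightarrow> integral {0..} (\<lambda>t. c t * exp (- \<rho> * t)))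
    (at_right 0)"
  unfolding tendsto_iff dist_real_def
proof (intro allI impI)
  fix \<epsilon> :: real assume "0 < \<epsilon>"
  have "((\<lambda>T. 2 * M * exp (- \<rho> * T) / \<rho>) \<longlongrightarrow> 2 * M * 0 / \<rho>) at_top"
    using \<open>0 < \<rho>\<close> by (intro tendsto_intros filterlim_compose[OF exp_at_bot]
      filterlim_tendsto_neg_mult_at_bot[OF tendsto_const _ filterlim_ident]) auto
  then have "\<forall>\<^sub>F T in at_top. 0 \<le> T \<and> 2 * M * exp (- \<rho> * T) / \<rho> < \<epsilon> / 2"
    using \<open>0 < \<epsilon>\<close> by (intro eventually_conj eventually_ge_at_top order_tendstoD(2)) auto
  then obtain T where "0 \<le> T" and T: "2 * M * exp (- \<rho> * T) / \<rho> < \<epsilon> / 2"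
    unfolding eventually_at_top_linorder by (meson order_refl)
  obtain K where K: "\<And>h n t. 0 < h \<Longrightarrow> real n * h + h \<le> T + 1 \<Longrightarrow> t \<in> {real n * h..real n * h + h} \<Longrightarrow>
      \<bar>a h n - c t\<bar> \<le> K * h"
    using approx[of "T + 1"] by blast
  define C where "C = (T + 1) * (K + M * (\<rho>\<^sup>2 * (T + 1) + \<rho>))"
  define d where "d = min 1 (min (1 / \<rho>) (\<epsilon> / (2 * (\<bar>C\<bar> + 1))))"
  have "0 < d"
    using \<open>0 < \<rho>\<close> \<open>0 < \<epsilon>\<close> by (simp add: d_def)
  show "\<forall>\<^sub>F h in at_right 0. \<bar>h * (\<Sum>n. (1 - \<rho> * h) ^ n * a h n) - integral {0..} (\<lambda>t. c t * exp (- \<rho> * t))\<bar> < \<epsilon>"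
    unfolding eventually_at_right_field
  proof (intro exI conjI allI impI)
    fix h :: real assume "0 < h" "h < d"
    then have "h \<le> 1" "h < 1 / \<rho>" "h < \<epsilon> / (2 * (\<bar>C\<bar> + 1))"
      by (auto simp: d_def)
    then have "\<rho> * h \<le> 1" "(\<bar>C\<bar> + 1) * h < \<epsilon> / 2"
      using \<open>0 < \<rho>\<close> by (simp_all add: field_simps)
    moreover have "C * h \<le> (\<bar>C\<bar> + 1) * h"
      using \<open>0 < h\<close> by (intro mult_right_mono) auto
    ultimately have "\<rho> * h \<le> 1" "C * h < \<epsilon> / 2"
      by auto
    have "\<bar>h * (\<Sum>n. (1 - \<rho> * h) ^ n * a h n) - integral {0..} (\<lambda>t. c t * exp (- \<rho> * t))\<bar>
        \<le> 2 * M * exp (- \<rho> * T) / \<rho> + C * h"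
      using discounted_sum_integral_error[OF \<open>0 < \<rho>\<close> \<open>0 < h\<close> \<open>h \<le> 1\<close> \<open>\<rho> * h \<le> 1\<close> \<open>0 \<le> T\<close> assms(2) c
          a[OF \<open>0 < h\<close>] K[OF \<open>0 < h\<close>]]
      by (simp add: C_def mult_ac)
    then show "\<bar>h * (\<Sum>n. (1 - \<rho> * h) ^ n * a h n) - integral {0..} (\<lambda>t. c t * exp (- \<rho> * t))\<bar> < \<epsilon>"
      using T \<open>C * h < \<epsilon> / 2\<close> by linarith
  qed (use \<open>0 < d\<close> in simp)
qed

section \<open>The game\<close>

lemma closed_loop_lipschitz:
  fixes k :: "'a::real_normed_vector \<Rightarrow> ('p::finite \<Rightarrow> 'b::real_normed_vector) \<Rightarrow> 'c::real_normed_vector"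
  assumes k: "\<And>x y u v. x \<in> V \<Longrightarrow> y \<in> V \<Longrightarrow> (\<forall>j. u j \<in> U j) \<Longrightarrow> (\<forall>j. v j \<in> U j) \<Longrightarrow>
      norm (k x u - k y v) \<le> C * (norm (x - y) + (\<Sum>j\<in>UNIV. norm (u j - v j)))"
    and \<phi>U: "\<And>j x. x \<in> V \<Longrightarrow> \<phi> j x \<in> U j"
    and \<phi>: "\<And>j x y. x \<in> V \<Longrightarrow> y \<in> V \<Longrightarrow> norm (\<phi> j x - \<phi> j y) \<le> Ls * norm (x - y)"
    and "0 \<le> Ls"
  shows "(\<bar>C\<bar> * (1 + real CARD('p) * Ls))-lipschitz_on V (\<lambda>x. k x (\<lambda>j. \<phi> j x))"
proof (rule lipschitz_onI)
  fix x y assume "x \<in> V" "y \<in> V"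
  define S where "S = norm (x - y) + (\<Sum>j\<in>UNIV. norm (\<phi> j x - \<phi> j y))"
  have "0 \<le> S"
    unfolding S_def by (simp add: sum_nonneg)
  have "norm (k x (\<lambda>j. \<phi> j x) - k y (\<lambda>j. \<phi> j y)) \<le> C * S"
    unfolding S_def using \<phi>U \<open>x \<in> V\<close> \<open>y \<in> V\<close> by (intro k) auto
  also have "\<dots> \<le> \<bar>C\<bar> * S"
    using \<open>0 \<le> S\<close> by (intro mult_right_mono) auto
  also have "\<dots> \<le> \<bar>C\<bar> * ((1 + real CARD('p) * Ls) * norm (x - y))"
  proof (intro mult_left_mono)
    have "(\<Sum>j\<in>UNIV. norm (\<phi> j x - \<phi> j y)) \<le> (\<Sum>j\<in>(UNIV :: 'p set). Ls * norm (x - y))"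
      using \<phi>[OF \<open>x \<in> V\<close> \<open>y \<in> V\<close>] by (intro sum_mono)
    then show "S \<le> (1 + real CARD('p) * Ls) * norm (x - y)"
      unfolding S_def by (simp add: algebra_simps)
  qed simp
  finally show "dist (k x (\<lambda>j. \<phi> j x)) (k y (\<lambda>j. \<phi> j y)) \<le> \<bar>C\<bar> * (1 + real CARD('p) * Ls) * dist x y"
    by (simp add: dist_norm mult.assoc)
qed (use \<open>0 \<le> Ls\<close> in simp)

lemma admissible_traj_is_solution:
  assumes "admissible V U g \<phi>" "x0 \<in> V"
  shows "is_solution V g \<phi> x0 (traj V g \<phi> x0)"
proof -
  have "\<exists>x. is_solution V g \<phi> x0 x"
    using assms unfolding admissible_def by blast
  then show ?thesis
    unfolding traj_def by (rule someI_ex)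
qed

lemma is_solution_has_integral:
  assumes sol: "is_solution V g \<phi> x0 x" and "0 \<le> s" "s \<le> t"
  shows "((\<lambda>r. g (x r) (\<lambda>j. \<phi> j (x r))) has_integral (x t - x s)) {s..t}"
proof (rule fundamental_theorem_of_calculus_abs_continuous)
  show "abs_continuous_on {0..t} x"
    using sol \<open>0 \<le> s\<close> \<open>s \<le> t\<close> unfolding is_solution_def by auto
  have "AE r in lborel. 0 < r \<longrightarrow> (x has_vector_derivative g (x r) (\<lambda>j. \<phi> j (x r))) (at r)"
    using sol unfolding is_solution_def by blast
  then show "AE r in lborel. r \<in> {s<..<t} \<longrightarrow> (x has_vector_derivative g (x r) (\<lambda>j. \<phi> j (x r))) (at r)"
    by eventually_elim (use \<open>0 \<le> s\<close> in auto)
qed (use \<open>0 \<le> s\<close> \<open>s \<le> t\<close> in auto)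

theorem proposition1:
  fixes V :: "(real^'n) set"
    and U :: "'p::finite \<Rightarrow> (real^'m) set"
    and g :: "real^'n \<Rightarrow> ('p \<Rightarrow> real^'m) \<Rightarrow> real^'n"
    and f :: "'p \<Rightarrow> real^'n \<Rightarrow> ('p \<Rightarrow> real^'m) \<Rightarrow> real"
    and \<phi> :: "'p \<Rightarrow> real^'n \<Rightarrow> real^'m"
    and \<rho> Lg M Ls :: real and L :: "'p \<Rightarrow> real"
  assumes rho: "\<rho> > 0"
    and adm: "admissible V U g \<phi>"
    and disc: "\<And>h x0 n. h > 0 \<Longrightarrow> x0 \<in> V \<Longrightarrow> euler g \<phi> h x0 n \<in> V"
    and Ls: "Ls > 0"
    and lip_phi: "\<And>i x1 x2. x1 \<in> V \<Longrightarrow> x2 \<in> V \<Longrightarrow> norm (\<phi> i x1 - \<phi> i x2) \<le> Ls * norm (x1 - x2)"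
    and H1: "\<And>x y u v. x \<in> V \<Longrightarrow> y \<in> V \<Longrightarrow> (\<forall>j. u j \<in> U j) \<Longrightarrow> (\<forall>j. v j \<in> U j) \<Longrightarrow>
               norm (g x u - g y v) \<le> Lg * (norm (x - y) + (\<Sum>j\<in>UNIV. norm (u j - v j)))"
    and H2: "\<And>i x y u v. x \<in> V \<Longrightarrow> y \<in> V \<Longrightarrow> (\<forall>j. u j \<in> U j) \<Longrightarrow> (\<forall>j. v j \<in> U j) \<Longrightarrow>
               \<bar>f i x u - f i y v\<bar> \<le> L i * (norm (x - y) + (\<Sum>j\<in>UNIV. norm (u j - v j)))"
    and H3: "\<And>i x u. x \<in> V \<Longrightarrow> (\<forall>j. u j \<in> U j) \<Longrightarrow> \<bar>f i x u\<bar> \<le> M"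
  shows "\<forall>x\<in>V. \<forall>i. ((\<lambda>h. \<bar>payoff_h g f \<rho> h \<phi> i x - payoff V g f \<rho> \<phi> i x\<bar>) \<longlongrightarrow> 0) (at_right 0)"
proof (intro ballI allI)
  fix x0 i assume "x0 \<in> V"
  define X where "X = traj V g \<phi> x0"
  have \<phi>U: "\<And>j y. y \<in> V \<Longrightarrow> \<phi> j y \<in> U j"
    using adm unfolding admissible_def by blast
  have "0 \<le> Ls" using Ls by simp
  have sol: "is_solution V g \<phi> x0 X"
    unfolding X_def using adm \<open>x0 \<in> V\<close> by (rule admissible_traj_is_solution)
  interpret lipschitz_ode_solution V "\<lambda>y. g y (\<lambda>j. \<phi> j y)" "\<bar>Lg\<bar> * (1 + real CARD('p) * Ls)" X
  proof
    show "(\<bar>Lg\<bar> * (1 + real CARD('p) * Ls))-lipschitz_on V (\<lambda>y. g y (\<lambda>j. \<phi> j y))"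
      using H1 \<phi>U lip_phi \<open>0 \<le> Ls\<close> by (rule closed_loop_lipschitz)
  next
    show "X t \<in> V" if "0 \<le> t" for t
      using sol that unfolding is_solution_def by blast
  next
    show "((\<lambda>r. g (X r) (\<lambda>j. \<phi> j (X r))) has_integral X t - X s) {s..t}" if "0 \<le> s" "s \<le> t" for s t
      using sol that by (rule is_solution_has_integral)
  qed
  have lip_f: "(\<bar>L i\<bar> * (1 + real CARD('p) * Ls))-lipschitz_on V (\<lambda>y. f i y (\<lambda>j. \<phi> j y))"
    by (rule closed_loop_lipschitz[where k="f i", OF _ \<phi>U lip_phi \<open>0 \<le> Ls\<close>]) (simp add: H2)
  have "((\<lambda>h. payoff_h g f \<rho> h \<phi> i x0) \<longlongrightarrow> payoff V g f \<rho> \<phi> i x0) (at_right 0)"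
    unfolding payoff_h_def payoff_def X_def[symmetric]
  proof (rule discounted_sum_tendsto_integral[OF rho])
    show "continuous_on {0..} (\<lambda>t. f i (X t) (\<lambda>j. \<phi> j (X t)))"
      using solution_in
      by (intro continuous_on_compose2[OF lipschitz_on_continuous_on[OF lip_f] continuous_on_solution]) auto
    show "\<bar>f i (X t) (\<lambda>j. \<phi> j (X t))\<bar> \<le> M" if "0 \<le> t" for t
      using solution_in[OF that] \<phi>U by (intro H3) auto
    show "\<bar>f i (euler g \<phi> h x0 n) (\<lambda>j. \<phi> j (euler g \<phi> h x0 n))\<bar> \<le> M" if "0 < h" for h n
      using disc[OF that \<open>x0 \<in> V\<close>] \<phi>U by (intro H3) auto
    show "\<exists>K. \<forall>h n t. 0 < h \<longrightarrow> real n * h + h \<le> T \<longrightarrow> t \<in> {real n * h..real n * h + h} \<longrightarrow>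
        \<bar>f i (euler g \<phi> h x0 n) (\<lambda>j. \<phi> j (euler g \<phi> h x0 n)) - f i (X t) (\<lambda>j. \<phi> j (X t))\<bar> \<le> K * h" for T
      using euler_observable_error[OF lip_f, of "\<lambda>h. euler g \<phi> h x0" T] sol disc \<open>x0 \<in> V\<close>
      by (simp add: is_solution_def dist_real_def)
  qed
  then show "((\<lambda>h. \<bar>payoff_h g f \<rho> h \<phi> i x0 - payoff V g f \<rho> \<phi> i x0\<bar>) \<longlongrightarrow> 0) (at_right 0)"
    by (intro tendsto_rabs_zero LIM_zero)
qed

end
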